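(* Let $(\pi_k)_{k=0}^K$ be deterministic policies on an MDP as in the context. Define $q^{\pi'_0} := q^{\pi_0}$, $v^{\pi'_k} := \pi_k q^{\pi'_k}$, and $q^{\pi'_k} := r + \gamma P v^{\pi'_{k-1}}$ for $k\in\{1,\dots,K\}$. Define $\sigma_0^2 := P(v^{\pi_0})^2 - (Pv^{\pi_0})^2$ and, for $k\in\{1,\dots,K\}$, $\sigma_k^2 := P(v^{\pi'_{k-1}})^2 - (Pv^{\pi'_{k-1}})^2$ (squares componentwise), with $\sigma_k := \sqrt{\sigma_k^2}$. Then for every $k\in\{1,\dots,K\}$, $$\sum_{j=0}^{k-1}\gamma^{j+1}P_{k-j}^{k-1}\sigma_{k-j}\leq\sqrt{2H^3}\,\mathbf{1}.$$
   Context: MDP: finite state set $\mathcal{X}$, finite action set $\mathcal{A}$, discount $\gamma\in[0,1)$, reward $r\in[-1,1]^{\mathcal{X}\times\mathcal{A}}$, transition kernel $P(y|x,a)$, $H=1/(1-\gamma)$. $P$ is the matrix in $\mathbb{R}^{(\mathcal{X}\times\mathcal{A})\times\mathcal{X}}$ with $(Pv)(x,a)=\sum_yP(y|x,a)v(y)$; a policy $\pi$ is the matrix in $\mathbb{R}^{\mathcal{X}\times(\mathcal{X}\times\mathcal{A})}$ with $(\pi q)(x) = \sum_a\pi(a|x)q(x,a)$; $P^\pi := P\pi$; $q^\pi$ is the unique fixed point of $q\mapsto r+\gamma P^\pi q$ and $v^\pi=\pi q^\pi$. For $i\ge j$, $P_j^i := P^{\pi_i}P^{\pi_{i-1}}\cdots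 P^{\pi_j}$, and $P_j^i:=I$ if $i<j$. $\mathbf 1$ is the all-ones vector; inequality is componentwise. *)

theory Defs
  imports Complex_Main
begin

text \<open>Transition kernel P :: ('x \<times> 'a) \<Rightarrow> 'x \<Rightarrow> real, P xa y = P(y|x,a).\<close>

definition stochastic_kernel :: "('x::finite \<times> 'a::finite \<Rightarrow> 'x \<Rightarrow> real) \<Rightarrow> bool" where
  "stochastic_kernel P \<longleftrightarrow> (\<forall>xa y. 0 \<le> P xa y) \<and> (\<forall>xa. (\<Sum>y\<in>UNIV. P xa y) = 1)"

definition Papp :: "('x::finite \<times> 'a \<Rightarrow> 'x \<Rightarrow> real) \<Rightarrow> ('x \<Rightarrow> real) \<Rightarrow> ('x \<times> 'a \<Rightarrow> real)" where
  "Papp P v = (\<lambda>xa. \<Sum>y\<in>UNIV. P xa y * v y)"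

text \<open>(pi q)(x) = sum_a pi(a|x) q(x,a) = q(x, pi x) for deterministic pi\<close>
definition pol_app :: "('x \<Rightarrow> 'a) \<Rightarrow> ('x \<times> 'a \<Rightarrow> real) \<Rightarrow> ('x \<Rightarrow> real)" where
  "pol_app \<pi> q = (\<lambda>x. q (x, \<pi> x))"

definition Ppi :: "('x::finite \<times> 'a \<Rightarrow> 'x \<Rightarrow> real) \<Rightarrow> ('x \<Rightarrow> 'a) \<Rightarrow> ('x \<times> 'a \<Rightarrow> real) \<Rightarrow> ('x \<times> 'a \<Rightarrow> real)" where
  "Ppi P \<pi> q = Papp P (pol_app \<pi> q)"

definition qpi :: "('x::finite \<times> 'a \<Rightarrow> 'x \<Rightarrow> real) \<Rightarrow> real \<Rightarrow> ('x \<times> 'a \<Rightarrow> real) \<Rightarrow> ('x \<Rightarrow> 'a) \<Rightarrow> ('x \<times> 'a \<Rightarrow> real)" where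
  "qpi P \<gamma> r \<pi> = (THE q. q = (\<lambda>xa. r xa + \<gamma> * Ppi P \<pi> q xa))"

definition vpi :: "('x::finite \<times> 'a \<Rightarrow> 'x \<Rightarrow> real) \<Rightarrow> real \<Rightarrow> ('x \<times> 'a \<Rightarrow> real) \<Rightarrow> ('x \<Rightarrow> 'a) \<Rightarrow> ('x \<Rightarrow> real)" where
  "vpi P \<gamma> r \<pi> = pol_app \<pi> (qpi P \<gamma> r \<pi>)"

text \<open>Product of n factors applied to q: P^{pi_{j+n-1}} ... P^{pi_j} q\<close>
fun Pprod_n :: "('x::finite \<times> 'a \<Rightarrow> 'x \<Rightarrow> real) \<Rightarrow> (nat \<Rightarrow> 'x \<Rightarrow> 'a) \<Rightarrow> nat \<Rightarrow> nat \<Rightarrow> ('x \<times> 'a \<Rightarrow> real) \<Rightarrow> ('x \<times> 'a \<Rightarrow> real)" where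
  "Pprod_n P \<pi>s j 0 q = q"
| "Pprod_n P \<pi>s j (Suc n) q = Ppi P (\<pi>s (j + n)) (Pprod_n P \<pi>s j n q)"

text \<open>P_j^i = P^{pi_i} ... P^{pi_j} (identity if i < j), applied to q\<close>
definition Pprod :: "('x::finite \<times> 'a \<Rightarrow> 'x \<Rightarrow> real) \<Rightarrow> (nat \<Rightarrow> 'x \<Rightarrow> 'a) \<Rightarrow> nat \<Rightarrow> nat \<Rightarrow> ('x \<times> 'a \<Rightarrow> real) \<Rightarrow> ('x \<times> 'a \<Rightarrow> real)" where
  "Pprod P \<pi>s j i q = Pprod_n P \<pi>s j (Suc i - j) q"

fun qprime :: "('x::finite \<times> 'a \<Rightarrow> 'x \<Rightarrow> real) \<Rightarrow> real \<Rightarrow> ('x \<times> 'a \<Rightarrow> real) \<Rightarrow> (nat \<Rightarrow> 'x \<Rightarrow> 'a) \<Rightarrow> nat \<Rightarrow> ('x \<times> 'a \<Rightarrow> real)" where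
  "qprime P \<gamma> r \<pi>s 0 = qpi P \<gamma> r (\<pi>s 0)"
| "qprime P \<gamma> r \<pi>s (Suc k) = (\<lambda>xa. r xa + \<gamma> * Papp P (pol_app (\<pi>s k) (qprime P \<gamma> r \<pi>s k)) xa)"

definition vprime :: "('x::finite \<times> 'a \<Rightarrow> 'x \<Rightarrow> real) \<Rightarrow> real \<Rightarrow> ('x \<times> 'a \<Rightarrow> real) \<Rightarrow> (nat \<Rightarrow> 'x \<Rightarrow> 'a) \<Rightarrow> nat \<Rightarrow> ('x \<Rightarrow> real)" where
  "vprime P \<gamma> r \<pi>s k = pol_app (\<pi>s k) (qprime P \<gamma> r \<pi>s k)"

definition varP :: "('x::finite \<times> 'a \<Rightarrow> 'x \<Rightarrow> real) \<Rightarrow> ('x \<Rightarrow> real) \<Rightarrow> ('x \<times> 'a \<Rightarrow> real)" where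
  "varP P v = (\<lambda>xa. Papp P (\<lambda>y. (v y)^2) xa - (Papp P v xa)^2)"

definition sigma :: "('x::finite \<times> 'a \<Rightarrow> 'x \<Rightarrow> real) \<Rightarrow> real \<Rightarrow> ('x \<times> 'a \<Rightarrow> real) \<Rightarrow> (nat \<Rightarrow> 'x \<Rightarrow> 'a) \<Rightarrow> nat \<Rightarrow> ('x \<times> 'a \<Rightarrow> real)" where
  "sigma P \<gamma> r \<pi>s k = (\<lambda>xa. sqrt (varP P (if k = 0 then vpi P \<gamma> r (\<pi>s 0) else vprime P \<gamma> r \<pi>s (k - 1)) xa))"

end

theory Submission
  imports Defs "HOL-Analysis.Convex"
begin

(* Write S_k for the left-hand side and W_k for the same sum with sigma_{k-j} replaced by
   sigma_{k-j}^2. Jensen's inequality for the stochastic matrices P_{k-j}^{k-1}, followed by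
   the Cauchy-Schwarz inequality with weights gamma^(j+1), gives S_k \<le> sqrt (gamma H W_k).
   Since W_{k+1} = gamma P^{pi_k} W_k + gamma sigma_{k+1}^2 and q'_{k+1} = r + gamma P v'_k,
   the variance term cancels the square (P v'_k)^2 in (q'_{k+1})^2, and the quantity
   gamma W_k + (q'_k)^2 obeys a recursion that keeps it below 2 H^2 as long as |r| \<le> 1 and
   |q'_k| \<le> H. Hence gamma W_k \<le> 2 H^2 and S_k \<le> sqrt (2 H^3). *)

lemma stochastic_kernel_nonneg: "stochastic_kernel P \<Longrightarrow> 0 \<le> P xa y"
  unfolding stochastic_kernel_def by blast

lemma stochastic_kernel_row_sum: "stochastic_kernel P \<Longrightarrow> (\<Sum>y\<in>UNIV. P xa y) = 1"
  unfolding stochastic_kernel_def by blast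

lemma Papp_const: "stochastic_kernel P \<Longrightarrow> Papp P (\<lambda>_. c) xa = c"
  by (simp add: Papp_def stochastic_kernel_row_sum flip: sum_distrib_right)

lemma Papp_mono:
  "stochastic_kernel P \<Longrightarrow> (\<And>y. f y \<le> g y) \<Longrightarrow> Papp P f xa \<le> Papp P g xa"
  unfolding Papp_def by (intro sum_mono mult_left_mono) (auto simp: stochastic_kernel_nonneg)

lemma Papp_add: "Papp P (\<lambda>y. f y + g y) xa = Papp P f xa + Papp P g xa"
  by (simp add: Papp_def distrib_left sum.distrib)

lemma Papp_diff: "Papp P (\<lambda>y. f y - g y) xa = Papp P f xa - Papp P g xa"
  by (simp add: Papp_def right_diff_distrib sum_subtractf)

lemma Papp_cmult: "Papp P (\<lambda>y. c * f y) xa = c * Papp P f xa"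
  by (simp add: Papp_def sum_distrib_left mult.left_commute)

lemma Papp_sum: "Papp P (\<lambda>y. \<Sum>i\<in>I. f i y) xa = (\<Sum>i\<in>I. Papp P (f i) xa)"
  by (simp add: Papp_def sum_distrib_left sum.swap[of _ UNIV I])

lemma abs_Papp_le:
  assumes "stochastic_kernel P" and "\<And>y. \<bar>f y\<bar> \<le> M"
  shows "\<bar>Papp P f xa\<bar> \<le> M"
proof -
  have "- M \<le> f y" "f y \<le> M" for y
    using assms(2)[of y] by (auto simp: abs_le_iff)
  then have "Papp P (\<lambda>_. - M) xa \<le> Papp P f xa" "Papp P f xa \<le> Papp P (\<lambda>_. M) xa"
    by (intro Papp_mono[OF assms(1)]; simp)+
  then show ?thesis by (simp add: Papp_const[OF assms(1)])
qed

lemma power2_Papp_le: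
  assumes "stochastic_kernel P"
  shows "(Papp P f xa)\<^sup>2 \<le> Papp P (\<lambda>y. (f y)\<^sup>2) xa"
proof -
  define m where "m = Papp P f xa"
  have "0 \<le> Papp P (\<lambda>y. (f y - m)\<^sup>2) xa"
    using Papp_mono[OF assms, of "\<lambda>_. 0"] by (simp add: Papp_const[OF assms])
  also have "(\<lambda>y. (f y - m)\<^sup>2) = (\<lambda>y. ((f y)\<^sup>2 + m\<^sup>2) - 2 * m * f y)"
    by (simp add: power2_eq_square algebra_simps)
  finally show ?thesis
    by (simp add: Papp_diff Papp_add Papp_cmult Papp_const[OF assms] m_def power2_eq_square)
qed

lemma varP_nonneg: "stochastic_kernel P \<Longrightarrow> 0 \<le> varP P v xa"
  using power2_Papp_le by (simp add: varP_def)

lemma Papp_sqrt_le: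
  assumes "stochastic_kernel P" and "\<And>y. 0 \<le> f y"
  shows "Papp P (\<lambda>y. sqrt (f y)) xa \<le> sqrt (Papp P f xa)"
proof -
  have "(Papp P (\<lambda>y. sqrt (f y)) xa)\<^sup>2 \<le> Papp P f xa"
    using power2_Papp_le[OF assms(1), of "\<lambda>y. sqrt (f y)"] assms(2) by simp
  then show ?thesis by (rule real_le_rsqrt)
qed

lemma Ppi_apply: "Ppi P \<pi> q xa = Papp P (\<lambda>y. q (y, \<pi> y)) xa"
  by (simp add: Ppi_def pol_app_def)

lemma Pprod_n_nonneg:
  "stochastic_kernel P \<Longrightarrow> (\<And>z. 0 \<le> f z) \<Longrightarrow> 0 \<le> Pprod_n P \<pi>s j n f xa"
proof (induction n arbitrary: xa)
  case (Suc n)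
  then show ?case
    using Papp_mono[of P "\<lambda>_. 0"] by (simp add: Ppi_apply Papp_const)
qed simp

lemma Pprod_n_sqrt_le:
  assumes "stochastic_kernel P" and "\<And>z. 0 \<le> f z"
  shows "Pprod_n P \<pi>s j n (\<lambda>z. sqrt (f z)) xa \<le> sqrt (Pprod_n P \<pi>s j n f xa)"
proof (induction n arbitrary: xa)
  case (Suc n)
  let ?\<pi> = "\<pi>s (j + n)"
  have "Pprod_n P \<pi>s j (Suc n) (\<lambda>z. sqrt (f z)) xa
      \<le> Papp P (\<lambda>y. sqrt (Pprod_n P \<pi>s j n f (y, ?\<pi> y))) xa"
    unfolding Pprod_n.simps Ppi_apply by (intro Papp_mono[OF assms(1)] Suc.IH)
  also have "\<dots> \<le> sqrt (Pprod_n P \<pi>s j (Suc n) f xa)"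
    unfolding Pprod_n.simps Ppi_apply
    by (intro Papp_sqrt_le[OF assms(1)] Pprod_n_nonneg[OF assms])
  finally show ?case .
qed simp

lemma sum_weighted_sqrt_le:
  fixes w x :: "'i \<Rightarrow> real"
  assumes "\<And>i. i \<in> I \<Longrightarrow> 0 \<le> w i" and "\<And>i. i \<in> I \<Longrightarrow> 0 \<le> x i"
  shows "(\<Sum>i\<in>I. w i * sqrt (x i)) \<le> sqrt ((\<Sum>i\<in>I. w i) * (\<Sum>i\<in>I. w i * x i))"
proof (rule real_le_rsqrt)
  have "(\<Sum>i\<in>I. w i * sqrt (x i)) = (\<Sum>i\<in>I. sqrt (w i) * sqrt (w i * x i))"
    using assms by (intro sum.cong) (auto simp: real_sqrt_mult)
  also have "\<dots>\<^sup>2 \<le> (\<Sum>i\<in>I. (sqrt (w i))\<^sup>2) * (\<Sum>i\<in>I. (sqrt (w i * x i))\<^sup>2)"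
    by (rule Cauchy_Schwarz_ineq_sum)
  also have "\<dots> = (\<Sum>i\<in>I. w i) * (\<Sum>i\<in>I. w i * x i)"
    using assms by (intro arg_cong2[where f = "(*)"] sum.cong) auto
  finally show "(\<Sum>i\<in>I. w i * sqrt (x i))\<^sup>2 \<le> (\<Sum>i\<in>I. w i) * (\<Sum>i\<in>I. w i * x i)" .
qed

definition discounted_backward_sum ::
  "('x::finite \<times> 'a \<Rightarrow> 'x \<Rightarrow> real) \<Rightarrow> (nat \<Rightarrow> 'x \<Rightarrow> 'a) \<Rightarrow> real
    \<Rightarrow> (nat \<Rightarrow> 'x \<times> 'a \<Rightarrow> real) \<Rightarrow> nat \<Rightarrow> 'x \<times> 'a \<Rightarrow> real" where
  "discounted_backward_sum P \<pi>s \<gamma> f k =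
     (\<lambda>xa. \<Sum>j<k. \<gamma>^(j+1) * Pprod P \<pi>s (k - j) (k - 1) (f (k - j)) xa)"

lemma discounted_backward_sum_eq:
  "discounted_backward_sum P \<pi>s \<gamma> f k xa = (\<Sum>j<k. \<gamma>^(j+1) * Pprod_n P \<pi>s (k - j) j (f (k - j)) xa)"
  unfolding discounted_backward_sum_def Pprod_def
  by (intro sum.cong) (auto simp: Suc_diff_le)

lemma discounted_backward_sum_Suc:
  "discounted_backward_sum P \<pi>s \<gamma> f (Suc k) xa
     = \<gamma> * f (Suc k) xa + \<gamma> * Ppi P (\<pi>s k) (discounted_backward_sum P \<pi>s \<gamma> f k) xa"
proof -
  have "(\<Sum>i<k. \<gamma>^(i+2) * Pprod_n P \<pi>s (k - i) (Suc i) (f (k - i)) xa)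
      = (\<Sum>i<k. \<gamma> * Papp P (\<lambda>y. \<gamma>^(i+1) * Pprod_n P \<pi>s (k - i) i (f (k - i)) (y, \<pi>s k y)) xa)"
    by (intro sum.cong) (auto simp: Ppi_apply Papp_cmult)
  then show ?thesis
    unfolding discounted_backward_sum_eq sum.lessThan_Suc_shift Ppi_apply Papp_sum
    by (simp add: sum_distrib_left)
qed

lemma discounted_backward_sum_nonneg:
  assumes "stochastic_kernel P" and "0 \<le> \<gamma>" and "\<And>i z. 0 \<le> g i z"
  shows "0 \<le> discounted_backward_sum P \<pi>s \<gamma> g k xa"
  unfolding discounted_backward_sum_eq using assms
  by (intro sum_nonneg mult_nonneg_nonneg Pprod_n_nonneg) auto

lemma discounted_backward_sum_sqrt_le:
  assumes "stochastic_kernel P" and "0 \<le> \<gamma>" and "\<And>i z. 0 \<le> g i z"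
  shows "discounted_backward_sum P \<pi>s \<gamma> (\<lambda>i z. sqrt (g i z)) k xa
           \<le> sqrt ((\<Sum>j<k. \<gamma>^(j+1)) * discounted_backward_sum P \<pi>s \<gamma> g k xa)"
proof -
  have "discounted_backward_sum P \<pi>s \<gamma> (\<lambda>i z. sqrt (g i z)) k xa
      \<le> (\<Sum>j<k. \<gamma>^(j+1) * sqrt (Pprod_n P \<pi>s (k - j) j (g (k - j)) xa))"
    unfolding discounted_backward_sum_eq using assms
    by (intro sum_mono mult_left_mono Pprod_n_sqrt_le) auto
  also have "\<dots> \<le> sqrt ((\<Sum>j<k. \<gamma>^(j+1)) * discounted_backward_sum P \<pi>s \<gamma> g k xa)"
    unfolding discounted_backward_sum_eq using assms
    by (intro sum_weighted_sqrt_le Pprod_n_nonneg) auto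
  finally show ?thesis .
qed

definition bellman_op ::
  "('x::finite \<times> 'a \<Rightarrow> 'x \<Rightarrow> real) \<Rightarrow> real \<Rightarrow> ('x \<times> 'a \<Rightarrow> real) \<Rightarrow> ('x \<Rightarrow> 'a)
    \<Rightarrow> ('x \<times> 'a \<Rightarrow> real) \<Rightarrow> 'x \<times> 'a \<Rightarrow> real" where
  "bellman_op P \<gamma> r \<pi> q = (\<lambda>xa. r xa + \<gamma> * Ppi P \<pi> q xa)"

lemma bellman_op_diff:
  "bellman_op P \<gamma> r \<pi> f xa - bellman_op P \<gamma> r \<pi> g xa = \<gamma> * Ppi P \<pi> (\<lambda>z. f z - g z) xa"
  by (simp add: bellman_op_def Ppi_apply Papp_diff algebra_simps)

lemma abs_bellman_op_le:
  assumes "stochastic_kernel P" and "0 \<le> \<gamma>" and "\<bar>r xa\<bar> \<le> R" and "\<And>z. \<bar>q z\<bar> \<le> M"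
  shows "\<bar>bellman_op P \<gamma> r \<pi> q xa\<bar> \<le> R + \<gamma> * M"
proof -
  have "\<bar>Ppi P \<pi> q xa\<bar> \<le> M"
    unfolding Ppi_apply using assms(4) by (rule abs_Papp_le[OF assms(1)])
  then have "\<bar>\<gamma> * Ppi P \<pi> q xa\<bar> \<le> \<gamma> * M"
    unfolding abs_mult using assms(2) by (simp add: mult_left_mono)
  then show ?thesis
    unfolding bellman_op_def using assms(3) abs_triangle_ineq[of "r xa" "\<gamma> * Ppi P \<pi> q xa"]
    by linarith
qed

lemma abs_bellman_fixed_point_le:
  assumes "stochastic_kernel P" and "0 \<le> \<gamma>" and "\<gamma> < 1" and "\<And>xa. \<bar>r xa\<bar> \<le> R"
    and "bellman_op P \<gamma> r \<pi> q = q"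
  shows "\<bar>q xa\<bar> \<le> R / (1 - \<gamma>)"
proof -
  define M where "M = Max (range (\<lambda>z. \<bar>q z\<bar>))"
  have le_M: "\<bar>q z\<bar> \<le> M" for z
    unfolding M_def by (rule Max_ge) auto
  have "M \<in> range (\<lambda>z. \<bar>q z\<bar>)"
    unfolding M_def by (rule Max_in) auto
  then obtain z0 where "M = \<bar>bellman_op P \<gamma> r \<pi> q z0\<bar>"
    using assms(5) by auto
  also have "\<dots> \<le> R + \<gamma> * M"
    using assms(1,2,4) le_M by (rule abs_bellman_op_le)
  finally have "M \<le> R / (1 - \<gamma>)"
    using assms(3) by (simp add: field_simps)
  then show ?thesis
    using le_M[of xa] by linarith
qed

lemma bellman_fixed_point_unique:
  assumes "stochastic_kernel P" and "0 \<le> \<gamma>" and "\<gamma> < 1"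
    and "bellman_op P \<gamma> r \<pi> q1 = q1" and "bellman_op P \<gamma> r \<pi> q2 = q2"
  shows "q1 = q2"
proof
  fix xa
  have "bellman_op P \<gamma> (\<lambda>_. 0) \<pi> (\<lambda>z. q1 z - q2 z) = (\<lambda>z. q1 z - q2 z)"
  proof
    fix z
    have "q1 z - q2 z = \<gamma> * Ppi P \<pi> (\<lambda>z. q1 z - q2 z) z"
      using bellman_op_diff[of P \<gamma> r \<pi> q1 z q2] unfolding assms(4,5) .
    then show "bellman_op P \<gamma> (\<lambda>_. 0) \<pi> (\<lambda>z. q1 z - q2 z) z = q1 z - q2 z"
      by (simp add: bellman_op_def)
  qed
  from abs_bellman_fixed_point_le[OF assms(1-3) _ this, of 0 xa]
  show "q1 xa = q2 xa" by simp
qed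

lemma bellman_iterate_increment_le:
  assumes "stochastic_kernel P" and "0 \<le> \<gamma>" and "\<And>xa. \<bar>r xa\<bar> \<le> R"
  shows "\<bar>(bellman_op P \<gamma> r \<pi> ^^ Suc n) (\<lambda>_. 0) xa - (bellman_op P \<gamma> r \<pi> ^^ n) (\<lambda>_. 0) xa\<bar>
           \<le> R * \<gamma>^n"
proof (induction n arbitrary: xa)
  case 0
  show ?case
    using assms(3) by (simp add: bellman_op_def Ppi_apply Papp_def)
next
  case (Suc n)
  have "\<bar>\<gamma> * Ppi P \<pi> (\<lambda>z. (bellman_op P \<gamma> r \<pi> ^^ Suc n) (\<lambda>_. 0) z
                           - (bellman_op P \<gamma> r \<pi> ^^ n) (\<lambda>_. 0) z) xa\<bar> \<le> \<gamma> * (R * \<gamma>^n)"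
    unfolding Ppi_apply abs_mult abs_of_nonneg[OF assms(2)] using assms(2)
    by (intro mult_left_mono abs_Papp_le[OF assms(1)] Suc.IH)
  then show ?case
    by (simp only: funpow.simps comp_apply bellman_op_diff) (simp add: algebra_simps)
qed

lemma bellman_fixed_point_exists:
  assumes "stochastic_kernel P" and "0 \<le> \<gamma>" and "\<gamma> < 1"
  shows "\<exists>q. bellman_op P \<gamma> r \<pi> q = q"
proof -
  define u where "u n = (bellman_op P \<gamma> r \<pi> ^^ n) (\<lambda>_. 0)" for n
  define R where "R = Max (range (\<lambda>xa. \<bar>r xa\<bar>))"
  define L where "L xa = (\<Sum>n. u (Suc n) xa - u n xa)" for xa
  have u_tendsto: "(\<lambda>n. u n xa) \<longlonglongrightarrow> L xa" for xa
  proof -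
    have "summable (\<lambda>n. u (Suc n) xa - u n xa)"
    proof (rule summable_comparison_test)
      show "\<exists>N. \<forall>n\<ge>N. norm (u (Suc n) xa - u n xa) \<le> R * \<gamma>^n"
        unfolding u_def R_def using bellman_iterate_increment_le[OF assms(1,2)] by simp
      show "summable (\<lambda>n. R * \<gamma>^n)"
        using assms(2,3) by (intro summable_mult summable_geometric) simp
    qed
    then have "(\<lambda>n. \<Sum>i<n. u (Suc i) xa - u i xa) \<longlonglongrightarrow> L xa"
      unfolding L_def by (rule summable_LIMSEQ)
    moreover have "(\<Sum>i<n. u (Suc i) xa - u i xa) = u n xa" for n
      using sum_lessThan_telescope[of "\<lambda>i. u i xa" n] by (simp add: u_def)
    ultimately show ?thesis by simp
  qed
  have u_Suc_tendsto: "(\<lambda>n. u (Suc n) xa) \<longlonglongrightarrow> bellman_op P \<gamma> r \<pi> L xa" for xa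
  proof -
    have "(\<lambda>n. Papp P (\<lambda>y. u n (y, \<pi> y)) xa) \<longlonglongrightarrow> Papp P (\<lambda>y. L (y, \<pi> y)) xa"
      unfolding Papp_def by (intro tendsto_sum tendsto_mult_left u_tendsto)
    then show ?thesis
      unfolding u_def funpow.simps comp_apply bellman_op_def Ppi_apply
      by (intro tendsto_add tendsto_const tendsto_mult_left) (simp only: u_def)
  qed
  have "bellman_op P \<gamma> r \<pi> L = L"
  proof
    fix xa
    show "bellman_op P \<gamma> r \<pi> L xa = L xa"
      using LIMSEQ_unique[OF u_Suc_tendsto LIMSEQ_Suc[OF u_tendsto]] .
  qed
  then show ?thesis
    by (rule exI[of _ L])
qed

lemma qpi_bellman:
  assumes "stochastic_kernel P" and "0 \<le> \<gamma>" and "\<gamma> < 1"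
  shows "bellman_op P \<gamma> r \<pi> (qpi P \<gamma> r \<pi>) = qpi P \<gamma> r \<pi>"
proof -
  obtain q where q: "bellman_op P \<gamma> r \<pi> q = q"
    using bellman_fixed_point_exists[OF assms] by blast
  have "\<exists>!q. q = bellman_op P \<gamma> r \<pi> q"
  proof (rule ex1I)
    show "q = bellman_op P \<gamma> r \<pi> q"
      using q by (rule sym)
    show "q' = q" if "q' = bellman_op P \<gamma> r \<pi> q'" for q'
      using that[symmetric] by (rule bellman_fixed_point_unique[OF assms _ q])
  qed
  then have "qpi P \<gamma> r \<pi> = bellman_op P \<gamma> r \<pi> (qpi P \<gamma> r \<pi>)"
    unfolding qpi_def bellman_op_def by (rule theI')
  then show ?thesis
    by (rule sym)
qed

lemma qprime_Suc: "qprime P \<gamma> r \<pi>s (Suc k) = bellman_op P \<gamma> r (\<pi>s k) (qprime P \<gamma> r \<pi>s k)"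
  by (simp add: bellman_op_def Ppi_def)

definition sigma_sq ::
  "('x::finite \<times> 'a \<Rightarrow> 'x \<Rightarrow> real) \<Rightarrow> real \<Rightarrow> ('x \<times> 'a \<Rightarrow> real) \<Rightarrow> (nat \<Rightarrow> 'x \<Rightarrow> 'a)
    \<Rightarrow> nat \<Rightarrow> 'x \<times> 'a \<Rightarrow> real" where
  "sigma_sq P \<gamma> r \<pi>s k = varP P (if k = 0 then vpi P \<gamma> r (\<pi>s 0) else vprime P \<gamma> r \<pi>s (k - 1))"

lemma sigma_eq_sqrt_sigma_sq: "sigma P \<gamma> r \<pi>s k = (\<lambda>xa. sqrt (sigma_sq P \<gamma> r \<pi>s k xa))"
  by (simp add: sigma_def sigma_sq_def)

\<comment> \<open>The term (P v')^2 of the variance cancels against the one in (q')^2.\<close>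
lemma total_variance_step:
  "\<gamma> * discounted_backward_sum P \<pi>s \<gamma> (sigma_sq P \<gamma> r \<pi>s) (Suc k) xa + (qprime P \<gamma> r \<pi>s (Suc k) xa)\<^sup>2
     = \<gamma> * Papp P (\<lambda>y. \<gamma> * discounted_backward_sum P \<pi>s \<gamma> (sigma_sq P \<gamma> r \<pi>s) k (y, \<pi>s k y)
                        + \<gamma> * (vprime P \<gamma> r \<pi>s k y)\<^sup>2) xa
       + (2 * r xa * qprime P \<gamma> r \<pi>s (Suc k) xa - (r xa)\<^sup>2)"
  unfolding discounted_backward_sum_Suc
  by (simp add: sigma_sq_def varP_def vprime_def Ppi_apply Papp_add Papp_cmult
      power2_eq_square algebra_simps)

locale discounted_mdp =
  fixes P :: "'x::finite \<times> 'a::finite \<Rightarrow> 'x \<Rightarrow> real" and \<gamma> :: real and r :: "'x \<times> 'a \<Rightarrow> real"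
  assumes stochastic: "stochastic_kernel P"
    and discount_nonneg: "0 \<le> \<gamma>" and discount_less_one: "\<gamma> < 1"
    and reward_bounded: "\<bar>r xa\<bar> \<le> 1"
begin

definition H :: real where
  "H = 1 / (1 - \<gamma>)"

lemma horizon_nonneg: "0 \<le> H"
  using discount_less_one by (simp add: H_def)

lemma one_plus_discount_horizon: "1 + \<gamma> * H = H"
  using discount_less_one by (simp add: H_def field_simps)

lemma discounted_weights_le: "(\<Sum>j<k. \<gamma>^(j+1)) \<le> \<gamma> * H"
proof -
  have "(\<Sum>j<k. \<gamma>^(j+1)) = \<gamma> * ((1 - \<gamma>^k) / (1 - \<gamma>))"
    using discount_less_one by (simp add: sum_gp_strict flip: sum_distrib_left)
  also have "\<dots> \<le> \<gamma> * H"
    unfolding H_def using discount_nonneg discount_less_one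
    by (intro mult_left_mono divide_right_mono) auto
  finally show ?thesis .
qed

lemma abs_qpi_le: "\<bar>qpi P \<gamma> r \<pi> xa\<bar> \<le> H"
  unfolding H_def
  using abs_bellman_fixed_point_le[OF stochastic discount_nonneg discount_less_one
      reward_bounded qpi_bellman[OF stochastic discount_nonneg discount_less_one]] .

lemma abs_qprime_le: "\<bar>qprime P \<gamma> r \<pi>s k xa\<bar> \<le> H"
proof (induction k arbitrary: xa)
  case 0
  show ?case by (simp add: abs_qpi_le)
next
  case (Suc k)
  have "\<bar>qprime P \<gamma> r \<pi>s (Suc k) xa\<bar> \<le> 1 + \<gamma> * H"
    unfolding qprime_Suc
    by (rule abs_bellman_op_le[OF stochastic discount_nonneg reward_bounded Suc.IH])
  then show ?case
    by (simp only: one_plus_discount_horizon)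
qed

lemma total_variance_bound:
  "\<gamma> * discounted_backward_sum P \<pi>s \<gamma> (sigma_sq P \<gamma> r \<pi>s) k xa + (qprime P \<gamma> r \<pi>s k xa)\<^sup>2
     \<le> 2 * H\<^sup>2"
proof (induction k arbitrary: xa)
  case 0
  have "\<bar>qprime P \<gamma> r \<pi>s 0 xa\<bar>\<^sup>2 \<le> H\<^sup>2"
    by (rule power_mono[OF abs_qprime_le]) simp
  then have "(qprime P \<gamma> r \<pi>s 0 xa)\<^sup>2 \<le> H\<^sup>2"
    by simp
  also have "\<dots> \<le> 2 * H\<^sup>2"
    by simp
  finally show ?case
    by (simp add: discounted_backward_sum_def)
next
  case (Suc k)
  define v where "v = vprime P \<gamma> r \<pi>s k"
  define W where "W = discounted_backward_sum P \<pi>s \<gamma> (sigma_sq P \<gamma> r \<pi>s) k"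
  define q where "q = qprime P \<gamma> r \<pi>s (Suc k) xa"
  have "\<gamma> * discounted_backward_sum P \<pi>s \<gamma> (sigma_sq P \<gamma> r \<pi>s) (Suc k) xa + q\<^sup>2
      = \<gamma> * Papp P (\<lambda>y. \<gamma> * W (y, \<pi>s k y) + \<gamma> * (v y)\<^sup>2) xa + (2 * r xa * q - (r xa)\<^sup>2)"
    unfolding W_def v_def q_def by (rule total_variance_step)
  also have "\<dots> \<le> \<gamma> * (2 * H\<^sup>2) + 2 * H"
  proof (intro add_mono mult_left_mono discount_nonneg)
    have "\<gamma> * W (y, \<pi>s k y) + \<gamma> * (v y)\<^sup>2 \<le> 2 * H\<^sup>2" for y
      using Suc.IH[of "(y, \<pi>s k y)"] discount_less_one
        mult_right_mono[of \<gamma> 1 "(v y)\<^sup>2"]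
      by (simp add: W_def v_def vprime_def pol_app_def)
    then have "Papp P (\<lambda>y. \<gamma> * W (y, \<pi>s k y) + \<gamma> * (v y)\<^sup>2) xa \<le> Papp P (\<lambda>_. 2 * H\<^sup>2) xa"
      by (intro Papp_mono[OF stochastic])
    then show "Papp P (\<lambda>y. \<gamma> * W (y, \<pi>s k y) + \<gamma> * (v y)\<^sup>2) xa \<le> 2 * H\<^sup>2"
      by (simp only: Papp_const[OF stochastic])
    have "\<bar>r xa\<bar> * \<bar>q\<bar> \<le> 1 * H"
      unfolding q_def by (intro mult_mono reward_bounded abs_qprime_le abs_ge_zero zero_le_one)
    then have "r xa * q \<le> H"
      using abs_ge_self[of "r xa * q"] unfolding abs_mult by linarith
    then show "2 * r xa * q - (r xa)\<^sup>2 \<le> 2 * H"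
      using zero_le_power2[of "r xa"] by linarith
  qed
  also have "\<dots> = 2 * H * (1 + \<gamma> * H)"
    by (simp add: power2_eq_square algebra_simps)
  also have "\<dots> = 2 * H\<^sup>2"
    by (simp add: one_plus_discount_horizon power2_eq_square)
  finally show ?case
    by (simp add: q_def)
qed

lemma discounted_backward_sum_sigma_le:
  "discounted_backward_sum P \<pi>s \<gamma> (sigma P \<gamma> r \<pi>s) k xa \<le> sqrt (2 * H^3)"
proof -
  let ?W = "discounted_backward_sum P \<pi>s \<gamma> (sigma_sq P \<gamma> r \<pi>s) k xa"
  have W_nonneg: "0 \<le> ?W"
    using stochastic discount_nonneg varP_nonneg
    by (intro discounted_backward_sum_nonneg) (auto simp: sigma_sq_def)
  have "discounted_backward_sum P \<pi>s \<gamma> (sigma P \<gamma> r \<pi>s) k xa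
      \<le> sqrt ((\<Sum>j<k. \<gamma>^(j+1)) * ?W)"
    unfolding sigma_eq_sqrt_sigma_sq using stochastic discount_nonneg varP_nonneg
    by (intro discounted_backward_sum_sqrt_le) (auto simp: sigma_sq_def)
  also have "(\<Sum>j<k. \<gamma>^(j+1)) * ?W \<le> (\<gamma> * H) * ?W"
    by (rule mult_right_mono[OF discounted_weights_le W_nonneg])
  also have "\<dots> = H * (\<gamma> * ?W)"
    by (simp only: ac_simps)
  also have "\<dots> \<le> H * (2 * H\<^sup>2)"
  proof (rule mult_left_mono[OF _ horizon_nonneg])
    show "\<gamma> * ?W \<le> 2 * H\<^sup>2"
      using total_variance_bound[of \<pi>s k xa] zero_le_power2[of "qprime P \<gamma> r \<pi>s k xa"]
      by linarith
  qed
  finally show ?thesis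
    by (simp add: power2_eq_square power3_eq_cube ac_simps)
qed

end

theorem lemma22:
  fixes P :: "'x::finite \<times> 'a::finite \<Rightarrow> 'x \<Rightarrow> real"
    and r :: "'x \<times> 'a \<Rightarrow> real" and \<gamma> :: real
    and \<pi>s :: "nat \<Rightarrow> 'x \<Rightarrow> 'a" and K k :: nat
  assumes "stochastic_kernel P"
    and "0 \<le> \<gamma>" and "\<gamma> < 1"
    and "\<And>xa. \<bar>r xa\<bar> \<le> 1"
    and "1 \<le> k" and "k \<le> K"
  shows "\<forall>xa. (\<Sum>j<k. \<gamma>^(j+1) * Pprod P \<pi>s (k - j) (k - 1) (sigma P \<gamma> r \<pi>s (k - j)) xa)
           \<le> sqrt (2 * (1 / (1 - \<gamma>))^3)"
proof
  \<comment> \<open>The bound holds for every k.\<close>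
  interpret discounted_mdp P \<gamma> r
    using assms(1-4) by unfold_locales
  fix xa
  show "(\<Sum>j<k. \<gamma>^(j+1) * Pprod P \<pi>s (k - j) (k - 1) (sigma P \<gamma> r \<pi>s (k - j)) xa)
           \<le> sqrt (2 * (1 / (1 - \<gamma>))^3)"
    using discounted_backward_sum_sigma_le[of \<pi>s k xa]
    by (simp only: discounted_backward_sum_def H_def)
qed

end
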